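(* Let $f:D\to\{0,1\}$, $D\subseteq\{0,1\}^n$, be an $n$-bit partial Boolean function that depends on $n$ bits. Then $f$ can be computed exactly by a quantum 1-query algorithm if and only if either $n=1$, $D=\{0,1\}$ and $f(x)=x_1$ or $f(x)=1\oplus x_1$; or $n=2$, $D\subseteq\{0,1\}^2$ with $|D|\in\{3,4\}$, and $f(x)=x_1\oplus x_2$ or $f(x)=1\oplus x_1\oplus x_2$ for all $x\in D$.
   Context: An $n$-bit partial Boolean function is a map $f:D\to\{0,1\}$ with $D\subseteq\{0,1\}^n$. A multilinear polynomial $p$ in $x_1,\dots,x_n$ represents $f$ if $p(x)=f(x)$ for all $x\in D$. $f$ depends on $k$ bits if $k$ is the minimum, over all multilinear polynomials representing $f$, of the number of variables occurring in the polynomial. A quantum 1-query algorithm works in a finite-dimensional Hilbert space with orthonormal basis $\{|i,j'\rangle\}$, $i\in\{0,1,\dots,n\}$, $j'$ in a finite set; for input $x$ the oracle is $O_x|i,j'\rangle=(-1)^{x_i}|i,j'\rangle$ for $i\ge1$ and $O_x|0,j'\rangle=|0,j'\rangle$. The algorithm applies input-independent unitaries $U_0$, then $O_x$, then $U_1$ to an initial state $|\psi_0\rangle$ and performs a projective measurement with outcomes in $\{0,1\}$; it computes $f$ exactly if for every $x\in D$ the outcome is $f(x)$ with probability 1. *)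

theory Defs
  imports "HOL-Analysis.Analysis"
begin

text \<open>An input x in {0,1}^n is a function nat => bool whose bits are x 1, ..., x n
  (True = 1); canonically all other positions are False.\<close>

definition cube :: "nat \<Rightarrow> (nat \<Rightarrow> bool) set" where
  "cube n = {x. \<forall>i. x i \<longrightarrow> i \<in> {1..n}}"

text \<open>A multilinear polynomial in x_1..x_n with real coefficients is given by its
  coefficient function c on subsets S of {1..n} (monomial prod_{i in S} x_i).\<close>

definition peval :: "nat \<Rightarrow> (nat set \<Rightarrow> real) \<Rightarrow> (nat \<Rightarrow> bool) \<Rightarrow> real" where
  "peval n c x = (\<Sum>S\<in>Pow {1..n}. c S * (\<Prod>i\<in>S. (if x i then 1 else 0)))"

definition pvars :: "nat \<Rightarrow> (nat set \<Rightarrow> real) \<Rightarrow> nat set" where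
  "pvars n c = \<Union>{S \<in> Pow {1..n}. c S \<noteq> 0}"

definition represents :: "nat \<Rightarrow> (nat \<Rightarrow> bool) set \<Rightarrow> ((nat \<Rightarrow> bool) \<Rightarrow> bool)
    \<Rightarrow> (nat set \<Rightarrow> real) \<Rightarrow> bool" where
  "represents n D f c \<longleftrightarrow> (\<forall>x\<in>D. peval n c x = (if f x then 1 else 0))"

definition dep_bits :: "nat \<Rightarrow> (nat \<Rightarrow> bool) set \<Rightarrow> ((nat \<Rightarrow> bool) \<Rightarrow> bool) \<Rightarrow> nat" where
  "dep_bits n D f = (LEAST k. \<exists>c. represents n D f c \<and> card (pvars n c) = k)"

text \<open>Hilbert space with orthonormal basis |i,j> , i in {0..n}, j in {0..<m}
  (any finite set J is in bijection with some {0..<m}).\<close>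

type_synonym qidx = "nat \<times> nat"
type_synonym qvec = "qidx \<Rightarrow> complex"
type_synonym qop = "qidx \<Rightarrow> qidx \<Rightarrow> complex"

definition qI :: "nat \<Rightarrow> nat \<Rightarrow> qidx set" where
  "qI n m = {0..n} \<times> {0..<m}"

definition qapply :: "qidx set \<Rightarrow> qop \<Rightarrow> qvec \<Rightarrow> qvec" where
  "qapply I A v = (\<lambda>a. \<Sum>b\<in>I. A a b * v b)"

definition qnorm2 :: "qidx set \<Rightarrow> qvec \<Rightarrow> real" where
  "qnorm2 I v = (\<Sum>a\<in>I. (cmod (v a))\<^sup>2)"

definition unitary_on :: "qidx set \<Rightarrow> qop \<Rightarrow> bool" where
  "unitary_on I U \<longleftrightarrow>
     (\<forall>a\<in>I. \<forall>b\<in>I. (\<Sum>k\<in>I. cnj (U k a) * U k b) = (if a = b then 1 else 0))"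

definition projector_on :: "qidx set \<Rightarrow> qop \<Rightarrow> bool" where
  "projector_on I P \<longleftrightarrow>
     (\<forall>a\<in>I. \<forall>b\<in>I. P a b = cnj (P b a)) \<and>
     (\<forall>a\<in>I. \<forall>b\<in>I. (\<Sum>k\<in>I. P a k * P k b) = P a b)"

definition proj_meas :: "qidx set \<Rightarrow> qop \<Rightarrow> qop \<Rightarrow> bool" where
  "proj_meas I P0 P1 \<longleftrightarrow> projector_on I P0 \<and> projector_on I P1 \<and>
     (\<forall>a\<in>I. \<forall>b\<in>I. P0 a b + P1 a b = (if a = b then 1 else 0))"

definition query_op :: "(nat \<Rightarrow> bool) \<Rightarrow> qop" where
  "query_op x = (\<lambda>a b. if a = b then (if fst a \<ge> 1 \<and> x (fst a) then -1 else 1) else 0)"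

definition final_state :: "nat \<Rightarrow> nat \<Rightarrow> qvec \<Rightarrow> qop \<Rightarrow> qop \<Rightarrow> (nat \<Rightarrow> bool) \<Rightarrow> qvec" where
  "final_state n m psi0 U0 U1 x =
     qapply (qI n m) U1 (qapply (qI n m) (query_op x) (qapply (qI n m) U0 psi0))"

definition computes_exactly_1query ::
  "nat \<Rightarrow> (nat \<Rightarrow> bool) set \<Rightarrow> ((nat \<Rightarrow> bool) \<Rightarrow> bool) \<Rightarrow> bool" where
  "computes_exactly_1query n D f \<longleftrightarrow>
     (\<exists>m psi0 U0 U1 P0 P1.
        qnorm2 (qI n m) psi0 = 1 \<and>
        unitary_on (qI n m) U0 \<and> unitary_on (qI n m) U1 \<and>
        proj_meas (qI n m) P0 P1 \<and>
        (\<forall>x\<in>D. qnorm2 (qI n m)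
                  (qapply (qI n m) (if f x then P1 else P0) (final_state n m psi0 U0 U1 x)) = 1))"

end

theory Submission
  imports Defs
begin

text \<open>
  Let v be the state fed to the oracle and q i the squared norm of its block at query position i.
  Since U1 and the measurement cannot change inner products, inputs x, y with f x \<noteq> f y must
  give orthogonal queried states, i.e. \<Sum>i (-1)^(x i + y i) q i = 0.  If f depends on all n bits,
  it is sensitive to every bit i on D (otherwise Moebius inversion yields a representing
  polynomial without x i), and a pair of inputs differing only in bit i forces q i = 1/2.
  As the weights sum to 1, n \<le> 2, and the orthogonality relations then force f to be x 1
  (n = 1, q 0 = 1/2) or the parity of x 1 and x 2 (n = 2, q 0 = 0), up to negation; two
  sensitive pairs in different directions give |D| \<ge> 3.  Conversely, querying a uniform
  superposition of two positions computes these functions.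
\<close>

definition qinner :: "qidx set \<Rightarrow> qvec \<Rightarrow> qvec \<Rightarrow> complex" where
  "qinner I u w = (\<Sum>a\<in>I. cnj (u a) * w a)"

lemma qinner_cong:
  "(\<And>a. a \<in> I \<Longrightarrow> u a = u' a) \<Longrightarrow> (\<And>a. a \<in> I \<Longrightarrow> w a = w' a) \<Longrightarrow>
   qinner I u w = qinner I u' w'"
  unfolding qinner_def by (rule sum.cong) auto

lemma qapply_cong: "(\<And>b. b \<in> I \<Longrightarrow> u b = w b) \<Longrightarrow> qapply I A u = qapply I A w"
  unfolding qapply_def by (intro ext sum.cong) auto

lemma qnorm2_eq_qinner: "complex_of_real (qnorm2 I u) = qinner I u u"
  unfolding qnorm2_def qinner_def of_real_sum
  by (rule sum.cong) (simp_all add: complex_norm_square[symmetric] mult.commute)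

lemma qnorm2_eq_0_imp:
  assumes "finite I" "qnorm2 I u = 0" "a \<in> I"
  shows "u a = 0"
  using assms sum_nonneg_eq_0_iff[of I "\<lambda>b. (cmod (u b))\<^sup>2"] unfolding qnorm2_def by simp

lemma qinner_unitary:
  assumes "unitary_on I U" "finite I"
  shows "qinner I (qapply I U u) (qapply I U w) = qinner I u w"
proof -
  have "qinner I (qapply I U u) (qapply I U w) =
      (\<Sum>a\<in>I. \<Sum>b\<in>I. \<Sum>c\<in>I. cnj (u b) * w c * (cnj (U a b) * U a c))"
    by (simp add: qinner_def qapply_def sum_distrib_left sum_distrib_right mult_ac)
  also have "\<dots> = (\<Sum>b\<in>I. \<Sum>c\<in>I. \<Sum>a\<in>I. cnj (u b) * w c * (cnj (U a b) * U a c))"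
    by (subst sum.swap, rule sum.cong[OF refl], rule sum.swap)
  also have "\<dots> = (\<Sum>b\<in>I. \<Sum>c\<in>I. cnj (u b) * w c * (if b = c then 1 else 0))"
    using assms(1) unfolding unitary_on_def by (simp add: sum_distrib_left[symmetric])
  also have "\<dots> = (\<Sum>b\<in>I. \<Sum>c\<in>I. if b = c then cnj (u b) * w b else 0)"
    by (intro sum.cong refl) simp
  also have "\<dots> = qinner I u w"
    using assms(2) by (simp add: qinner_def)
  finally show ?thesis .
qed

lemma qapply_projector_idem:
  assumes "projector_on I P" "a \<in> I"
  shows "qapply I P (qapply I P w) a = qapply I P w a"
proof -
  have "qapply I P (qapply I P w) a = (\<Sum>b\<in>I. \<Sum>c\<in>I. P a b * P b c * w c)"
    by (simp add: qapply_def sum_distrib_left mult_ac)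
  also have "\<dots> = (\<Sum>c\<in>I. (\<Sum>b\<in>I. P a b * P b c) * w c)"
    unfolding sum_distrib_right by (rule sum.swap)
  also have "\<dots> = qapply I P w a"
  proof -
    have "\<forall>c\<in>I. (\<Sum>b\<in>I. P a b * P b c) = P a c"
      using assms unfolding projector_on_def by blast
    then show ?thesis unfolding qapply_def by (intro sum.cong refl) simp
  qed
  finally show ?thesis .
qed

lemma qinner_projector_adjoint:
  assumes "projector_on I P"
  shows "qinner I (qapply I P u) w = qinner I u (qapply I P w)"
proof -
  have "qinner I (qapply I P u) w = (\<Sum>a\<in>I. \<Sum>b\<in>I. cnj (u b) * (cnj (P a b) * w a))"
    by (simp add: qinner_def qapply_def sum_distrib_left sum_distrib_right mult_ac)
  also have "\<dots> = (\<Sum>a\<in>I. \<Sum>b\<in>I. cnj (u b) * (P b a * w a))"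
  proof -
    have "\<And>a b. a \<in> I \<Longrightarrow> b \<in> I \<Longrightarrow> cnj (P a b) = P b a"
      using assms unfolding projector_on_def by (metis complex_cnj_cnj)
    then show ?thesis by (intro sum.cong refl) simp
  qed
  also have "\<dots> = qinner I u (qapply I P w)"
    unfolding qinner_def qapply_def sum_distrib_left by (rule sum.swap)
  finally show ?thesis .
qed

lemma qapply_proj_meas_sum:
  assumes "proj_meas I P0 P1" "finite I" "a \<in> I"
  shows "qapply I P0 w a + qapply I P1 w a = w a"
proof -
  have "qapply I P0 w a + qapply I P1 w a = (\<Sum>b\<in>I. (P0 a b + P1 a b) * w b)"
    by (simp add: qapply_def sum.distrib distrib_right)
  also have "\<dots> = (\<Sum>b\<in>I. if a = b then w b else 0)"
    using assms(1,3) unfolding proj_meas_def by (intro sum.cong refl) simp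
  also have "\<dots> = w a" using assms(2,3) by simp
  finally show ?thesis .
qed

lemma qinner_proj_meas_split:
  assumes "proj_meas I P0 P1" "finite I"
  shows "qinner I u w = qinner I u (qapply I P0 w) + qinner I u (qapply I P1 w)"
  unfolding qinner_def sum.distrib[symmetric] distrib_left[symmetric]
  using qapply_proj_meas_sum[OF assms] by simp

lemma qnorm2_proj_meas:
  assumes "proj_meas I P0 P1" "finite I"
  shows "qnorm2 I (qapply I P0 s) + qnorm2 I (qapply I P1 s) = qnorm2 I s"
proof -
  have proj: "qinner I (qapply I P s) (qapply I P s) = qinner I s (qapply I P s)"
    if "projector_on I P" for P
    by (simp add: qinner_projector_adjoint[OF that] qinner_cong[OF refl qapply_projector_idem[OF that]])
  have "projector_on I P0" "projector_on I P1"
    using assms(1) by (simp_all add: proj_meas_def)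
  then have "complex_of_real (qnorm2 I (qapply I P0 s) + qnorm2 I (qapply I P1 s)) =
      complex_of_real (qnorm2 I s)"
    unfolding of_real_add qnorm2_eq_qinner qinner_proj_meas_split[OF assms, of s s]
    by (simp only: proj)
  then show ?thesis by (simp only: of_real_eq_iff)
qed

lemma qinner_eq_0_if_proj_meas_certain:
  assumes pm: "proj_meas I P0 P1" and fin: "finite I"
    and "qnorm2 I s = 1" "qnorm2 I (qapply I P0 s) = 1"
    and "qnorm2 I t = 1" "qnorm2 I (qapply I P1 t) = 1"
  shows "qinner I s t = 0"
proof -
  have "qnorm2 I (qapply I P1 s) = 0" "qnorm2 I (qapply I P0 t) = 0"
    using qnorm2_proj_meas[OF pm fin, of s] qnorm2_proj_meas[OF pm fin, of t] assms by simp_all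
  then have P1s: "\<And>a. a \<in> I \<Longrightarrow> qapply I P1 s a = 0" and P0t: "\<And>a. a \<in> I \<Longrightarrow> qapply I P0 t a = 0"
    using qnorm2_eq_0_imp[OF fin] by blast+
  have "qinner I s t = qinner I s (qapply I P1 t)"
    using qinner_proj_meas_split[OF pm fin, of s t] P0t by (simp add: qinner_def)
  also have "\<dots> = qinner I (qapply I P1 s) t"
    using pm by (simp add: qinner_projector_adjoint proj_meas_def)
  also have "\<dots> = 0" using P1s by (simp add: qinner_def)
  finally show ?thesis .
qed

section \<open>The weights of a one-query algorithm\<close>

definition query_sign :: "(nat \<Rightarrow> bool) \<Rightarrow> nat \<Rightarrow> real" where
  "query_sign x i = (if 1 \<le> i \<and> x i then -1 else 1)"

lemma query_sign_square: "query_sign x i * query_sign x i = 1"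
  by (simp add: query_sign_def)

lemma finite_qI: "finite (qI n m)"
  by (simp add: qI_def)

lemma qapply_query_op:
  assumes "finite I" "a \<in> I"
  shows "qapply I (query_op x) v a = complex_of_real (query_sign x (fst a)) * v a"
proof -
  have "qapply I (query_op x) v a =
      (\<Sum>b\<in>I. if a = b then complex_of_real (query_sign x (fst a)) * v a else 0)"
    unfolding qapply_def query_op_def query_sign_def by (intro sum.cong refl) auto
  also have "\<dots> = complex_of_real (query_sign x (fst a)) * v a"
    using assms by simp
  finally show ?thesis .
qed

lemma qinner_query_op:
  assumes "finite I"
  shows "qinner I (qapply I (query_op x) v) (qapply I (query_op y) v) =
    complex_of_real (\<Sum>a\<in>I. query_sign x (fst a) * query_sign y (fst a) * (cmod (v a))\<^sup>2)"
proof -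
  have conj_scaled: "cnj (complex_of_real s * z) * (complex_of_real t * z) =
      complex_of_real (s * t * (cmod z)\<^sup>2)" for s t z
  proof -
    have "cnj (complex_of_real s * z) * (complex_of_real t * z) =
        complex_of_real s * complex_of_real t * (z * cnj z)"
      by (simp add: mult_ac)
    then show ?thesis by (simp only: complex_norm_square[symmetric] of_real_mult)
  qed
  have "qinner I (qapply I (query_op x) v) (qapply I (query_op y) v) =
      qinner I (\<lambda>a. complex_of_real (query_sign x (fst a)) * v a)
        (\<lambda>a. complex_of_real (query_sign y (fst a)) * v a)"
    using assms by (intro qinner_cong) (simp_all add: qapply_query_op)
  also have "\<dots> = complex_of_real
      (\<Sum>a\<in>I. query_sign x (fst a) * query_sign y (fst a) * (cmod (v a))\<^sup>2)"
    unfolding qinner_def of_real_sum by (intro sum.cong refl) (rule conj_scaled)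
  finally show ?thesis .
qed

lemma sum_qI_blocks:
  "(\<Sum>a\<in>qI n m. g (fst a) * (h a :: real)) = (\<Sum>i=0..n. g i * (\<Sum>j<m. h (i, j)))"
proof -
  have "(\<Sum>i=0..n. g i * (\<Sum>j<m. h (i, j))) = (\<Sum>(i, j)\<in>{0..n} \<times> {..<m}. g i * h (i, j))"
    by (simp add: sum_distrib_left sum.cartesian_product)
  also have "\<dots> = (\<Sum>a\<in>qI n m. g (fst a) * h a)"
    unfolding qI_def lessThan_atLeast0 by (intro sum.cong) auto
  finally show ?thesis by simp
qed

text \<open>q i stands for the squared norm of block i of the state fed to the oracle.\<close>

definition query_weights ::
  "nat \<Rightarrow> (nat \<Rightarrow> bool) set \<Rightarrow> ((nat \<Rightarrow> bool) \<Rightarrow> bool) \<Rightarrow> (nat \<Rightarrow> real) \<Rightarrow> bool" where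
  "query_weights n D f q \<longleftrightarrow> (\<forall>i. 0 \<le> q i) \<and> (\<Sum>i=0..n. q i) = 1 \<and>
     (\<forall>x\<in>D. \<forall>y\<in>D. f x \<noteq> f y \<longrightarrow> (\<Sum>i=0..n. query_sign x i * query_sign y i * q i) = 0)"

lemma qinner_final_state:
  assumes "unitary_on (qI n m) U1"
  shows "qinner (qI n m) (final_state n m psi0 U0 U1 x) (final_state n m psi0 U0 U1 y) =
    complex_of_real (\<Sum>i=0..n. query_sign x i * query_sign y i *
      (\<Sum>j<m. (cmod (qapply (qI n m) U0 psi0 (i, j)))\<^sup>2))"
  unfolding final_state_def qinner_unitary[OF assms finite_qI] qinner_query_op[OF finite_qI]
  by (simp add: sum_qI_blocks[where g = "\<lambda>i. query_sign x i * query_sign y i"])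

lemma exact_1query_query_weights:
  assumes "computes_exactly_1query n D f"
  shows "\<exists>q. query_weights n D f q"
proof -
  obtain m psi0 U0 U1 P0 P1 where psi0: "qnorm2 (qI n m) psi0 = 1"
    and U0: "unitary_on (qI n m) U0" and U1: "unitary_on (qI n m) U1"
    and pm: "proj_meas (qI n m) P0 P1"
    and exact: "\<forall>x\<in>D. qnorm2 (qI n m)
      (qapply (qI n m) (if f x then P1 else P0) (final_state n m psi0 U0 U1 x)) = 1"
    using assms unfolding computes_exactly_1query_def by blast
  let ?I = "qI n m" and ?s = "final_state n m psi0 U0 U1"
  define q where "q i = (\<Sum>j<m. (cmod (qapply ?I U0 psi0 (i, j)))\<^sup>2)" for i
  have inner: "qinner ?I (?s x) (?s y) =
      complex_of_real (\<Sum>i=0..n. query_sign x i * query_sign y i * q i)" for x y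
    unfolding q_def by (rule qinner_final_state[OF U1])
  have "complex_of_real (qnorm2 ?I (qapply ?I U0 psi0)) = complex_of_real (qnorm2 ?I psi0)"
    by (simp only: qnorm2_eq_qinner qinner_unitary[OF U0 finite_qI])
  then have "qnorm2 ?I (qapply ?I U0 psi0) = 1"
    using psi0 by (simp only: of_real_eq_iff)
  then have "(\<Sum>i=0..n. q i) = 1"
    using sum_qI_blocks[where g = "\<lambda>_. 1" and h = "\<lambda>a. (cmod (qapply ?I U0 psi0 a))\<^sup>2"]
    by (simp add: qnorm2_def q_def)
  then have norm: "qnorm2 ?I (?s x) = 1" for x
    using inner[of x x] by (simp add: qnorm2_eq_qinner[symmetric] query_sign_square)
  have orth: "(\<Sum>i=0..n. query_sign x i * query_sign y i * q i) = 0"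
    if "x \<in> D" "y \<in> D" "\<not> f x" "f y" for x y
  proof -
    have "qinner ?I (?s x) (?s y) = 0"
      using exact that by (intro qinner_eq_0_if_proj_meas_certain[OF pm finite_qI norm _ norm]) auto
    then show ?thesis unfolding inner by (simp only: of_real_eq_0_iff)
  qed
  have "(\<Sum>i=0..n. query_sign x i * query_sign y i * q i) = 0"
    if "x \<in> D" "y \<in> D" "f x \<noteq> f y" for x y
    using that orth[of x y] orth[of y x] by (cases "f x") (simp_all add: mult.commute)
  moreover have "\<forall>i. 0 \<le> q i"
    by (simp add: q_def sum_nonneg)
  ultimately show ?thesis
    using \<open>(\<Sum>i=0..n. q i) = 1\<close> unfolding query_weights_def by blast
qed

section \<open>Polynomial representations and sensitivity\<close>

lemma sum_Pow_insert:
  assumes "finite T" "a \<notin> T"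
  shows "(\<Sum>A\<in>Pow (insert a T). h A) = (\<Sum>A\<in>Pow T. h A) + (\<Sum>A\<in>Pow T. h (insert a A))"
proof -
  have "inj_on (insert a) (Pow T)"
    using assms(2) by (auto simp: inj_on_def)
  moreover have "(\<Sum>A\<in>Pow (insert a T). h A) = (\<Sum>A\<in>Pow T. h A) + (\<Sum>A\<in>insert a ` Pow T. h A)"
    unfolding Pow_insert using assms by (intro sum.union_disjoint) auto
  ultimately show ?thesis
    by (simp add: sum.reindex)
qed

lemma sum_Pow_mobius_inversion:
  assumes "finite C"
  shows "(\<Sum>T\<in>Pow C. \<Sum>A\<in>Pow T. (-1::real) ^ card (T - A) * F A) = F C"
  using assms
proof (induction C arbitrary: F rule: finite_induct)
  case empty
  then show ?case by simp
next
  case (insert a C)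
  have step: "(\<Sum>A\<in>Pow (insert a T). (-1::real) ^ card (insert a T - A) * F A) =
      (\<Sum>A\<in>Pow T. (-1::real) ^ card (T - A) * (F (insert a A) - F A))" if "T \<subseteq> C" for T
  proof -
    have fT: "finite T" and aT: "a \<notin> T"
      using that insert by (auto intro: finite_subset)
    have "(-1::real) ^ card (insert a T - A) * F A + (-1) ^ card (insert a T - insert a A) * F (insert a A)
        = (-1) ^ card (T - A) * (F (insert a A) - F A)" if "A \<subseteq> T" for A
    proof -
      have "insert a T - A = insert a (T - A)" "insert a T - insert a A = T - A"
        using aT that by auto
      then show ?thesis
        using fT aT by (simp add: algebra_simps)
    qed
    then show ?thesis
      unfolding sum_Pow_insert[OF fT aT] sum.distrib[symmetric] by (intro sum.cong) auto
  qed
  have "(\<Sum>T\<in>Pow (insert a C). \<Sum>A\<in>Pow T. (-1::real) ^ card (T - A) * F A)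
      = F C + (\<Sum>T\<in>Pow C. \<Sum>A\<in>Pow T. (-1::real) ^ card (T - A) * (F (insert a A) - F A))"
    unfolding sum_Pow_insert[OF insert(1,2)] insert.IH[of F] by (simp add: step)
  also have "\<dots> = F (insert a C)"
    using insert.IH[of "\<lambda>A. F (insert a A) - F A"] by simp
  finally show ?case .
qed

lemma prod_indicator:
  assumes "finite T"
  shows "(\<Prod>j\<in>T. if x j then 1 else (0::real)) = (if T \<subseteq> {j. x j} then 1 else 0)"
  using assms by (auto simp: prod_zero_iff intro!: prod.neutral)

text \<open>The coefficients of the unique multilinear polynomial in the variables S that takes the
  value F (S \<inter> {j. x j}) at x.\<close>

definition mobius_coeffs :: "nat set \<Rightarrow> (nat set \<Rightarrow> real) \<Rightarrow> nat set \<Rightarrow> real" where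
  "mobius_coeffs S F T = (if T \<subseteq> S then \<Sum>A\<in>Pow T. (-1) ^ card (T - A) * F A else 0)"

lemma pvars_mobius_coeffs: "pvars n (mobius_coeffs S F) \<subseteq> S"
  unfolding pvars_def mobius_coeffs_def by auto

lemma peval_mobius_coeffs:
  assumes "S \<subseteq> {1..n}"
  shows "peval n (mobius_coeffs S F) x = F (S \<inter> {j. x j})"
proof -
  have finS: "finite S"
    using assms by (rule finite_subset) simp
  have "peval n (mobius_coeffs S F) x =
      (\<Sum>T\<in>Pow (S \<inter> {j. x j}). \<Sum>A\<in>Pow T. (-1) ^ card (T - A) * F A)"
    unfolding peval_def
  proof (rule sum.mono_neutral_cong_right)
    show "Pow (S \<inter> {j. x j}) \<subseteq> Pow {1..n}"
      using assms by auto
    show "\<forall>T\<in>Pow {1..n} - Pow (S \<inter> {j. x j}).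
        mobius_coeffs S F T * (\<Prod>j\<in>T. if x j then 1 else 0) = 0"
    proof
      fix T assume "T \<in> Pow {1..n} - Pow (S \<inter> {j. x j})"
      then have "finite T" "\<not> T \<subseteq> S \<or> \<not> T \<subseteq> {j. x j}"
        by (auto intro: finite_subset)
      then show "mobius_coeffs S F T * (\<Prod>j\<in>T. if x j then 1 else 0) = 0"
        by (auto simp: mobius_coeffs_def prod_indicator)
    qed
    show "mobius_coeffs S F T * (\<Prod>j\<in>T. if x j then 1 else 0) =
        (\<Sum>A\<in>Pow T. (-1) ^ card (T - A) * F A)" if "T \<in> Pow (S \<inter> {j. x j})" for T
    proof -
      have "finite T" "T \<subseteq> S" "T \<subseteq> {j. x j}"
        using that finS by (auto intro: finite_subset)
      then show ?thesis
        by (simp add: mobius_coeffs_def prod_indicator)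
    qed
  qed simp
  also have "\<dots> = F (S \<inter> {j. x j})"
    using finS by (intro sum_Pow_mobius_inversion) simp
  finally show ?thesis .
qed

lemma represents_if_determined_by_vars:
  assumes "S \<subseteq> {1..n}" and det: "\<forall>x\<in>D. \<forall>y\<in>D. (\<forall>k\<in>S. x k = y k) \<longrightarrow> f x = f y"
  shows "\<exists>c. represents n D f c \<and> pvars n c \<subseteq> S"
proof -
  define F where "F A = (if \<exists>z\<in>D. S \<inter> {j. z j} = A \<and> f z then 1 else (0::real))" for A
  have "F (S \<inter> {j. x j}) = (if f x then 1 else 0)" if "x \<in> D" for x
  proof -
    have "f z \<Longrightarrow> f x" if "z \<in> D" "S \<inter> {j. z j} = S \<inter> {j. x j}" for z
      using det \<open>x \<in> D\<close> that by blast
    then show ?thesis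
      using \<open>x \<in> D\<close> by (auto simp: F_def)
  qed
  then have "represents n D f (mobius_coeffs S F)"
    unfolding represents_def by (simp add: peval_mobius_coeffs[OF assms(1)])
  then show ?thesis
    using pvars_mobius_coeffs by blast
qed

definition sensitive_at :: "(nat \<Rightarrow> bool) set \<Rightarrow> ((nat \<Rightarrow> bool) \<Rightarrow> bool) \<Rightarrow> nat \<Rightarrow> bool" where
  "sensitive_at D f i \<longleftrightarrow> (\<exists>x\<in>D. \<exists>y\<in>D. f x \<noteq> f y \<and> (\<forall>k. k \<noteq> i \<longrightarrow> x k = y k))"

lemma dep_bits_less_if_not_sensitive_at:
  assumes D: "D \<subseteq> cube n" and i: "i \<in> {1..n}" and "\<not> sensitive_at D f i"
  shows "dep_bits n D f < n"
proof -
  define S where "S = {1..n} - {i}"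
  have det: "\<forall>x\<in>D. \<forall>y\<in>D. (\<forall>k\<in>S. x k = y k) \<longrightarrow> f x = f y"
  proof (intro ballI impI)
    fix x y assume xy: "x \<in> D" "y \<in> D" and agree: "\<forall>k\<in>S. x k = y k"
    have "x k = y k" if "k \<noteq> i" for k
    proof (cases "k \<in> {1..n}")
      case True
      then show ?thesis using agree that by (simp add: S_def)
    next
      case False
      then have "\<not> x k" "\<not> y k"
        using D xy unfolding cube_def by auto
      then show ?thesis by simp
    qed
    then show "f x = f y"
      using xy assms(3) unfolding sensitive_at_def by blast
  qed
  have "S \<subseteq> {1..n}"
    by (auto simp: S_def)
  then obtain c where c: "represents n D f c" "pvars n c \<subseteq> S"
    using represents_if_determined_by_vars[OF _ det] by blast
  have "dep_bits n D f \<le> card (pvars n c)"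
    unfolding dep_bits_def by (rule Least_le) (use c in blast)
  also have "\<dots> \<le> card S"
    using c(2) by (intro card_mono) (simp_all add: S_def)
  also have "\<dots> < n"
    using i by (simp add: S_def)
  finally show ?thesis .
qed

lemma sensitive_at_if_dep_bits_eq:
  assumes "D \<subseteq> cube n" "dep_bits n D f = n" "i \<in> {1..n}"
  shows "sensitive_at D f i"
proof (rule ccontr)
  assume "\<not> sensitive_at D f i"
  then have "dep_bits n D f < n"
    by (rule dep_bits_less_if_not_sensitive_at[OF assms(1,3)])
  with assms(2) show False by simp
qed

lemma differ_at_if_agree_elsewhere:
  assumes "x \<noteq> y" "\<forall>k. k \<noteq> i \<longrightarrow> x k = y k"
  shows "x i \<noteq> y i"
proof
  assume "x i = y i"
  then have "x = y"
    using assms(2) by (intro ext) metis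
  with assms(1) show False ..
qed

lemma query_weight_eq_half_if_sensitive_at:
  assumes q: "query_weights n D f q" and "sensitive_at D f i" and i: "i \<in> {1..n}"
  shows "q i = 1/2"
proof -
  obtain x y where xy: "x \<in> D" "y \<in> D" "f x \<noteq> f y" and agree: "\<forall>k. k \<noteq> i \<longrightarrow> x k = y k"
    using assms(2) unfolding sensitive_at_def by blast
  have "x \<noteq> y"
    using xy(3) by blast
  then have "x i \<noteq> y i"
    using agree by (rule differ_at_if_agree_elsewhere)
  then have sign: "query_sign x k * query_sign y k = (if k = i then -1 else 1)" for k
    using agree i by (cases "k = i") (auto simp: query_sign_def)
  have "(\<Sum>k=0..n. query_sign x k * query_sign y k * q k) =
      (\<Sum>k=0..n. q k - (if k = i then 2 * q k else 0))"
    by (intro sum.cong refl) (simp add: sign)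
  also have "\<dots> = (\<Sum>k=0..n. q k) - 2 * q i"
    using i by (simp add: sum_subtractf)
  also have "\<dots> = 1 - 2 * q i"
    using q by (simp add: query_weights_def)
  moreover have "(\<Sum>k=0..n. query_sign x k * query_sign y k * q k) = 0"
    using q xy unfolding query_weights_def by blast
  ultimately show ?thesis by simp
qed

lemma query_weights_if_sensitive_everywhere:
  assumes q: "query_weights n D f q" and sens: "\<forall>i\<in>{1..n}. sensitive_at D f i"
  shows "q 0 = 1 - real n / 2" and "n \<le> 2"
proof -
  have "(\<Sum>i=1..n. q i) = (\<Sum>i=1..n. 1/2)"
    using query_weight_eq_half_if_sensitive_at[OF q] sens by (intro sum.cong) auto
  then have "(\<Sum>i=0..n. q i) = q 0 + real n / 2"
    by (simp add: sum.atLeast_Suc_atMost)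
  then show q0: "q 0 = 1 - real n / 2"
    using q by (simp add: query_weights_def)
  have "0 \<le> q 0"
    using q by (simp add: query_weights_def)
  with q0 show "n \<le> 2" by simp
qed

lemma eq_or_eq_not_if_separated_by:
  assumes "\<forall>x\<in>D. \<forall>y\<in>D. f x \<noteq> f y \<longrightarrow> h x \<noteq> h y" "a \<in> D" "b \<in> D" "f a \<noteq> f b"
  shows "(\<forall>x\<in>D. f x = h x) \<or> (\<forall>x\<in>D. f x = (\<not> h x))"
proof -
  have "f x = (f a = (h x = h a))" if "x \<in> D" for x
  proof -
    have "f x \<noteq> f a \<Longrightarrow> h x \<noteq> h a" "f x \<noteq> f b \<Longrightarrow> h x \<noteq> h b" "h a \<noteq> h b"
      using assms that by blast+
    then show ?thesis
      using assms(4) by argo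
  qed
  then show ?thesis by (cases "f a = h a") auto
qed

lemma cube_eq_image_Pow: "cube n = (\<lambda>S i. i \<in> S) ` Pow {1..n}"
proof (intro equalityI subsetI)
  fix x assume "x \<in> cube n"
  then show "x \<in> (\<lambda>S i. i \<in> S) ` Pow {1..n}"
    by (intro image_eqI[of _ _ "{j. x j}"]) (auto simp: cube_def)
qed (auto simp: cube_def)

lemma card_cube: "card (cube n) = 2 ^ n"
proof -
  have "inj_on (\<lambda>S i. i \<in> S) (Pow {1..n})"
    by (auto simp: inj_on_def fun_eq_iff)
  then show ?thesis
    by (simp add: cube_eq_image_Pow card_image card_Pow)
qed

lemma finite_cube: "finite (cube n)"
  by (simp add: cube_eq_image_Pow)

lemma one_bit_case:
  assumes D: "D \<subseteq> cube 1" and q: "query_weights 1 D f q" and sens: "sensitive_at D f 1"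
  shows "D = cube 1 \<and> ((\<forall>x\<in>D. f x = x 1) \<or> (\<forall>x\<in>D. f x = (\<not> x 1)))"
proof -
  have "\<forall>i\<in>{1..1}. sensitive_at D f i"
    using sens by simp
  then have "q 0 = 1/2" "q 1 = 1/2"
    using query_weights_if_sensitive_everywhere(1)[OF q] query_weight_eq_half_if_sensitive_at[OF q sens]
    by simp_all
  have sep: "\<forall>x\<in>D. \<forall>y\<in>D. f x \<noteq> f y \<longrightarrow> x 1 \<noteq> y 1"
  proof (intro ballI impI)
    fix x y assume "x \<in> D" "y \<in> D" "f x \<noteq> f y"
    then have "(\<Sum>i=0..1. query_sign x i * query_sign y i * q i) = 0"
      using q unfolding query_weights_def by blast
    moreover have "{0..1::nat} = {0, 1}" by auto
    ultimately show "x 1 \<noteq> y 1"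
      using \<open>q 0 = 1/2\<close> \<open>q 1 = 1/2\<close> by (simp add: query_sign_def split: if_splits)
  qed
  obtain a b where ab: "a \<in> D" "b \<in> D" "f a \<noteq> f b"
    using sens unfolding sensitive_at_def by blast
  have "a \<noteq> b"
    using ab(3) by blast
  then have "card (cube 1) \<le> card D"
    using ab(1,2) card_mono[OF finite_subset[OF D finite_cube], of "{a, b}"] by (simp add: card_cube)
  then have "D = cube 1"
    using D card_mono[OF finite_cube D] by (intro card_subset_eq[OF finite_cube]) simp_all
  then show ?thesis
    using eq_or_eq_not_if_separated_by[where h = "\<lambda>x. x 1", OF sep ab] by blast
qed

lemma two_bit_case:
  assumes D: "D \<subseteq> cube 2" and q: "query_weights 2 D f q"
    and sens1: "sensitive_at D f 1" and sens2: "sensitive_at D f 2"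
  shows "card D \<in> {3, 4} \<and> ((\<forall>x\<in>D. f x = (x 1 \<noteq> x 2)) \<or> (\<forall>x\<in>D. f x = (x 1 = x 2)))"
proof -
  have "\<forall>i\<in>{1..2}. sensitive_at D f i"
    using sens1 sens2 by (auto simp: numeral_2_eq_2 le_Suc_eq)
  then have "q 0 = 0" "q 1 = 1/2" "q 2 = 1/2"
    using query_weights_if_sensitive_everywhere(1)[OF q] query_weight_eq_half_if_sensitive_at[OF q]
      sens1 sens2 by simp_all
  have sep: "\<forall>x\<in>D. \<forall>y\<in>D. f x \<noteq> f y \<longrightarrow> (x 1 \<noteq> x 2) \<noteq> (y 1 \<noteq> y 2)"
  proof (intro ballI impI)
    fix x y assume "x \<in> D" "y \<in> D" "f x \<noteq> f y"
    then have "(\<Sum>i=0..2. query_sign x i * query_sign y i * q i) = 0"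
      using q unfolding query_weights_def by blast
    moreover have "{0..2::nat} = {0, 1, 2}" by auto
    ultimately show "(x 1 \<noteq> x 2) \<noteq> (y 1 \<noteq> y 2)"
      using \<open>q 0 = 0\<close> \<open>q 1 = 1/2\<close> \<open>q 2 = 1/2\<close>
      by (simp add: query_sign_def split: if_splits)
  qed
  obtain a b where ab: "a \<in> D" "b \<in> D" "f a \<noteq> f b" and agree_ab: "\<forall>k. k \<noteq> 1 \<longrightarrow> a k = b k"
    using sens1 unfolding sensitive_at_def by blast
  obtain c d where cd: "c \<in> D" "d \<in> D" "f c \<noteq> f d" and agree_cd: "\<forall>k. k \<noteq> 2 \<longrightarrow> c k = d k"
    using sens2 unfolding sensitive_at_def by blast
  have finD: "finite D"
    using D finite_cube by (rule finite_subset)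
  have "c \<noteq> d"
    using cd(3) by blast
  then have "c 2 \<noteq> d 2"
    using agree_cd by (rule differ_at_if_agree_elsewhere)
  moreover have "a 2 = b 2"
    using agree_ab by simp
  ultimately have "c \<notin> {a, b} \<or> d \<notin> {a, b}"
    by blast
  then obtain e where e: "e \<in> D" "e \<notin> {a, b}"
    using cd(1,2) by blast
  have "a \<noteq> b"
    using ab(3) by blast
  then have "card {a, b, e} = 3"
    using e(2) by (auto simp: card_insert_if)
  then have "3 \<le> card D"
    using card_mono[OF finD, of "{a, b, e}"] ab(1,2) e(1) by simp
  moreover have "card D \<le> 4"
    using card_mono[OF finite_cube D] by (simp add: card_cube)
  ultimately have "card D \<in> {3, 4}"
    by auto
  then show ?thesis
    using eq_or_eq_not_if_separated_by[where h = "\<lambda>x. x 1 \<noteq> x 2", OF sep ab(1-3)] by blast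
qed

section \<open>Exact one-query algorithms\<close>

lemma computes_exactly_1query_restrict:
  assumes "computes_exactly_1query n D' g" "D \<subseteq> D'" "\<forall>x\<in>D. f x = g x"
  shows "computes_exactly_1query n D f"
proof -
  obtain m psi0 U0 U1 P0 P1 where alg: "qnorm2 (qI n m) psi0 = 1"
      "unitary_on (qI n m) U0" "unitary_on (qI n m) U1" "proj_meas (qI n m) P0 P1"
    and exact: "\<forall>x\<in>D'. qnorm2 (qI n m)
      (qapply (qI n m) (if g x then P1 else P0) (final_state n m psi0 U0 U1 x)) = 1"
    using assms(1) unfolding computes_exactly_1query_def by blast
  have "\<forall>x\<in>D. qnorm2 (qI n m)
      (qapply (qI n m) (if f x then P1 else P0) (final_state n m psi0 U0 U1 x)) = 1"
  proof
    fix x assume "x \<in> D"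
    then have "x \<in> D'" "f x = g x"
      using assms(2,3) by auto
    then show "qnorm2 (qI n m)
        (qapply (qI n m) (if f x then P1 else P0) (final_state n m psi0 U0 U1 x)) = 1"
      using exact by simp
  qed
  then show ?thesis
    unfolding computes_exactly_1query_def using alg by blast
qed

lemma computes_exactly_1query_not:
  assumes "computes_exactly_1query n D f"
  shows "computes_exactly_1query n D (\<lambda>x. \<not> f x)"
proof -
  obtain m psi0 U0 U1 P0 P1 where alg: "qnorm2 (qI n m) psi0 = 1"
      "unitary_on (qI n m) U0" "unitary_on (qI n m) U1" "proj_meas (qI n m) P0 P1"
    and exact: "\<forall>x\<in>D. qnorm2 (qI n m)
      (qapply (qI n m) (if f x then P1 else P0) (final_state n m psi0 U0 U1 x)) = 1"
    using assms unfolding computes_exactly_1query_def by blast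
  have "proj_meas (qI n m) P1 P0"
    using alg(4) unfolding proj_meas_def by (simp add: add.commute)
  moreover have "\<forall>x\<in>D. qnorm2 (qI n m)
      (qapply (qI n m) (if \<not> f x then P0 else P1) (final_state n m psi0 U0 U1 x)) = 1"
  proof
    fix x assume "x \<in> D"
    have "(if \<not> f x then P0 else P1) = (if f x then P1 else P0)"
      by simp
    then show "qnorm2 (qI n m)
        (qapply (qI n m) (if \<not> f x then P0 else P1) (final_state n m psi0 U0 U1 x)) = 1"
      using exact \<open>x \<in> D\<close> by (simp only:)
  qed
  ultimately show ?thesis
    unfolding computes_exactly_1query_def using alg(1-3) by blast
qed

lemma computes_exactly_1query_eq_or_eq_not:
  assumes "computes_exactly_1query n UNIV h" "(\<forall>x\<in>D. f x = h x) \<or> (\<forall>x\<in>D. f x = (\<not> h x))"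
  shows "computes_exactly_1query n D f"
  using assms(2)
proof
  assume "\<forall>x\<in>D. f x = h x"
  then show ?thesis
    by (rule computes_exactly_1query_restrict[OF assms(1) subset_UNIV])
next
  assume "\<forall>x\<in>D. f x = (\<not> h x)"
  then show ?thesis
    by (rule computes_exactly_1query_restrict[OF computes_exactly_1query_not[OF assms(1)] subset_UNIV])
qed

definition qid :: qop where
  "qid a b = (if a = b then 1 else 0)"

lemma qapply_qid:
  assumes "finite I" "a \<in> I"
  shows "qapply I qid v a = v a"
proof -
  have "qapply I qid v a = (\<Sum>b\<in>I. if a = b then v b else 0)"
    unfolding qapply_def qid_def by (intro sum.cong) auto
  then show ?thesis
    using assms by simp
qed

lemma unitary_on_qid:
  assumes "finite I"
  shows "unitary_on I qid"
  unfolding unitary_on_def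
proof (intro ballI)
  fix a b assume "a \<in> I" "b \<in> I"
  have "(\<Sum>k\<in>I. cnj (qid k a) * qid k b) = (\<Sum>k\<in>I. if k = a then qid a b else 0)"
    unfolding qid_def by (intro sum.cong) auto
  then show "(\<Sum>k\<in>I. cnj (qid k a) * qid k b) = (if a = b then 1 else 0)"
    using assms \<open>a \<in> I\<close> by (simp add: qid_def)
qed

lemma qapply_final_state_qid:
  "qapply (qI n m) P (final_state n m psi0 qid qid x) =
   qapply (qI n m) P (\<lambda>a. complex_of_real (query_sign x (fst a)) * psi0 a)"
proof (rule qapply_cong)
  fix b assume b: "b \<in> qI n m"
  then show "final_state n m psi0 qid qid x b = complex_of_real (query_sign x (fst b)) * psi0 b"
    unfolding final_state_def
    by (simp add: qapply_qid[OF finite_qI] qapply_query_op[OF finite_qI] qapply_qid[OF finite_qI b])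
qed

text \<open>Query the uniform superposition of the positions 0 and 1 and measure in the basis
  (|0\<rangle> \<plusminus> |1\<rangle>)/\<surd>2.\<close>

lemma computes_exactly_1query_bit:
  "computes_exactly_1query 1 UNIV (\<lambda>x. x 1)"
proof -
  define r where "r = complex_of_real (sqrt (1/2))"
  define psi :: qvec where "psi a = r" for a
  define P0 :: qop where "P0 a b = 1/2" for a b
  define P1 :: qop where "P1 a b = (if fst a = fst b then 1/2 else -1/2)" for a b
  have I: "qI 1 1 = {(0, 0), (1, 0)}"
    by (auto simp: qI_def)
  have r: "(cmod r)\<^sup>2 = 1/2"
    by (simp add: r_def)
  have "qnorm2 (qI 1 1) psi = 1"
    unfolding qnorm2_def I psi_def by (simp add: r)
  moreover have "proj_meas (qI 1 1) P0 P1"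
    unfolding proj_meas_def projector_on_def I P0_def P1_def by simp
  moreover have "qnorm2 (qI 1 1) (qapply (qI 1 1) (if x 1 then P1 else P0)
      (final_state 1 1 psi qid qid x)) = 1" for x
    unfolding qapply_final_state_qid unfolding qnorm2_def qapply_def I
    by (cases "x 1") (simp_all add: P0_def P1_def psi_def query_sign_def r)
  ultimately show ?thesis
    unfolding computes_exactly_1query_def using unitary_on_qid[OF finite_qI] by blast
qed

text \<open>The same with the positions 1 and 2; position 0 carries no amplitude.\<close>

lemma computes_exactly_1query_parity:
  "computes_exactly_1query 2 UNIV (\<lambda>x. x 1 \<noteq> x 2)"
proof -
  define r where "r = complex_of_real (sqrt (1/2))"
  define psi :: qvec where "psi a = (if fst a = 0 then 0 else r)" for a
  define P1 :: qop where
    "P1 a b = (if fst a = 0 \<or> fst b = 0 then 0 else if fst a = fst b then 1/2 else -1/2)" for a b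
  define P0 :: qop where "P0 a b = (if fst a = fst b then 1 else 0) - P1 a b" for a b
  have I: "qI 2 1 = {(0, 0), (1, 0), (2, 0)}"
    by (auto simp: qI_def)
  have r: "(cmod r)\<^sup>2 = 1/2"
    by (simp add: r_def)
  have "qnorm2 (qI 2 1) psi = 1"
    unfolding qnorm2_def I psi_def by (simp add: r)
  moreover have "proj_meas (qI 2 1) P0 P1"
    unfolding proj_meas_def projector_on_def I P0_def P1_def by simp
  moreover have "qnorm2 (qI 2 1) (qapply (qI 2 1) (if x 1 \<noteq> x 2 then P1 else P0)
      (final_state 2 1 psi qid qid x)) = 1" for x
    unfolding qapply_final_state_qid unfolding qnorm2_def qapply_def I
    by (cases "x 1"; cases "x 2") (simp_all add: P0_def P1_def psi_def query_sign_def r)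
  ultimately show ?thesis
    unfolding computes_exactly_1query_def using unitary_on_qid[OF finite_qI] by blast
qed

theorem theorem2:
  fixes n :: nat and D :: "(nat \<Rightarrow> bool) set" and f :: "(nat \<Rightarrow> bool) \<Rightarrow> bool"
  assumes "n \<ge> 1"
    and "D \<subseteq> cube n"
    and "dep_bits n D f = n"
  shows "computes_exactly_1query n D f \<longleftrightarrow>
     ((n = 1 \<and> D = cube 1 \<and>
        ((\<forall>x\<in>D. f x = x 1) \<or> (\<forall>x\<in>D. f x = (\<not> x 1)))) \<or>
      (n = 2 \<and> card D \<in> {3, 4} \<and>
        ((\<forall>x\<in>D. f x = (x 1 \<noteq> x 2)) \<or> (\<forall>x\<in>D. f x = (x 1 = x 2)))))"
proof
  assume "computes_exactly_1query n D f"
  then obtain q where q: "query_weights n D f q"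
    using exact_1query_query_weights by blast
  have sens: "\<forall>i\<in>{1..n}. sensitive_at D f i"
    using sensitive_at_if_dep_bits_eq[OF assms(2,3)] by blast
  then have "n = 1 \<or> n = 2"
    using query_weights_if_sensitive_everywhere(2)[OF q] assms(1) by auto
  then show "(n = 1 \<and> D = cube 1 \<and> ((\<forall>x\<in>D. f x = x 1) \<or> (\<forall>x\<in>D. f x = (\<not> x 1)))) \<or>
      (n = 2 \<and> card D \<in> {3, 4} \<and>
        ((\<forall>x\<in>D. f x = (x 1 \<noteq> x 2)) \<or> (\<forall>x\<in>D. f x = (x 1 = x 2))))"
  proof
    assume "n = 1"
    then have "D \<subseteq> cube 1" "query_weights 1 D f q" "sensitive_at D f 1"
      using assms(2) q sens by auto
    then show ?thesis
      using one_bit_case \<open>n = 1\<close> by blast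
  next
    assume "n = 2"
    then have "D \<subseteq> cube 2" "query_weights 2 D f q" "sensitive_at D f 1" "sensitive_at D f 2"
      using assms(2) q sens by auto
    then show ?thesis
      using two_bit_case \<open>n = 2\<close> by blast
  qed
next
  assume "(n = 1 \<and> D = cube 1 \<and> ((\<forall>x\<in>D. f x = x 1) \<or> (\<forall>x\<in>D. f x = (\<not> x 1)))) \<or>
      (n = 2 \<and> card D \<in> {3, 4} \<and>
        ((\<forall>x\<in>D. f x = (x 1 \<noteq> x 2)) \<or> (\<forall>x\<in>D. f x = (x 1 = x 2))))"
  then show "computes_exactly_1query n D f"
    using computes_exactly_1query_eq_or_eq_not[OF computes_exactly_1query_bit]
      computes_exactly_1query_eq_or_eq_not[OF computes_exactly_1query_parity]
    by auto
qed

end
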